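(* Let $\mathbf{x}\in\mathbb{R}^d$, $\mathbf{x}\neq 0$, and consider the training set $\{(\mathbf{x},1),(-\mathbf{x},-1)\}$. (1) Let $k$ be the FC-NTK kernel defined below, and $g_k$ its minimum norm interpolant on this training set. Then for all $\mathbf{z}\in\mathbb{R}^d$, $g_k(\mathbf{z})\ge 0$ if and only if $\mathbf{z}^T\mathbf{x}\ge 0$. (2) Let $K$ be the CNTK-GAP kernel defined below (with patch size $q$, $1\le q\le d$), and assume the $2\times 2$ Gram matrix $H_K$ of $K$ on $\{\mathbf{x},-\mathbf{x}\}$ is invertible. Then either for all $\mathbf{z}\in\mathbb{R}^d$ [$g_K(\mathbf{z})\ge 0$ iff $\mathbf{z}^T\mathbf{1}_d\ge 0$], or for all $\mathbf{z}\in\mathbb{R}^d$ [$g_K(\mathbf{z})\ge 0$ iff $\mathbf{z}^T\mathbf{1}_d\le 0$]; i.e., the hyperplane $\mathbf{z}^T\mathbf{1}_d=0$ is the decision boundary.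
   Context: FC-NTK (NTK of the bias-free two-layer ReLU network $\mathbf{v}^T\sigma(W\mathbf{x})$ with Gaussian initialization): for $\mathbf{z},\mathbf{x}\in\mathbb{R}^n$, $k(\mathbf{z},\mathbf{x})=\frac{1}{\pi}\left(2\mathbf{z}^T\mathbf{x}(\pi-\phi)+\|\mathbf{z}\|\|\mathbf{x}\|\sin\phi\right)$, where $\phi=\arccos\left(\frac{\mathbf{z}^T\mathbf{x}}{\|\mathbf{z}\|\|\mathbf{x}\|}\right)$ is the angle between $\mathbf{z}$ and $\mathbf{x}$ (with $k=0$ if either argument is $0$). CNTK-GAP (for the bias-free two-layer circular-convolution network with global average pooling, filter size $q$): for $\mathbf{z},\mathbf{x}\in\mathbb{R}^d$ let $\bar{\mathbf{z}}_i=(z_i,z_{(i+1)\bmod d},\dots,z_{(i+q-1)\bmod d})^T\in\mathbb{R}^q$ be the cyclic patches ($1\le i\le d$, indices interpreted cyclically in $\{1,\dots,d\}$), similarly $\bar{\mathbf{x}}_j$; then $K(\mathbf{z},\mathbf{x})=\frac{1}{d^2}\sum_{i=1}^d\sum_{j=1}^d k(\bar{\mathbf{z}}_i,\bar{\mathbf{x}}_j)$ with $k$ the FC-NTK on $\mathbb{R}^q$. For a kernel $k$ and training data $\{(\mathbf{x}_i,y_i)\}_{i=1}^n$ with invertible Gram matrix $H_k=(k(\mathbf{x}_i,\mathbf{x}_j))_{i,j}$, the minimum norm interpolant (limit $\lambda\to 0$ of kernel ridge regression) is $g_k(\mathbf{z})=(k(\mathbf{z},\mathbf{x}_1),\dots,k(\mathbf{z},\mathbf{x}_n))H_k^{-1}\mathbf{y}$,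 $\mathbf{y}=(y_1,\dots,y_n)^T$. $\mathbf{1}_d$ is the all-ones vector. *)

theory Defs
  imports "HOL-Analysis.Analysis"
begin

text \<open>Vectors in R^n are represented as functions nat => real, only the
coordinates 0..n-1 being relevant (0-indexed).\<close>

definition ip :: "nat \<Rightarrow> (nat \<Rightarrow> real) \<Rightarrow> (nat \<Rightarrow> real) \<Rightarrow> real" where
  "ip n z x = (\<Sum>i<n. z i * x i)"

definition vnorm :: "nat \<Rightarrow> (nat \<Rightarrow> real) \<Rightarrow> real" where
  "vnorm n z = sqrt (ip n z z)"

definition fc_ntk :: "nat \<Rightarrow> (nat \<Rightarrow> real) \<Rightarrow> (nat \<Rightarrow> real) \<Rightarrow> real" where
  "fc_ntk n z x =
     (if vnorm n z = 0 \<or> vnorm n x = 0 then 0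
      else (let \<phi> = arccos (ip n z x / (vnorm n z * vnorm n x))
            in (1 / pi) * (2 * ip n z x * (pi - \<phi>) + vnorm n z * vnorm n x * sin \<phi>)))"

definition patch :: "nat \<Rightarrow> nat \<Rightarrow> (nat \<Rightarrow> real) \<Rightarrow> nat \<Rightarrow> (nat \<Rightarrow> real)" where
  "patch d q z i = (\<lambda>j. z ((i + j) mod d))"

definition cntk_gap :: "nat \<Rightarrow> nat \<Rightarrow> (nat \<Rightarrow> real) \<Rightarrow> (nat \<Rightarrow> real) \<Rightarrow> real" where
  "cntk_gap d q z x =
     (1 / (real d)^2) * (\<Sum>i<d. \<Sum>j<d. fc_ntk q (patch d q z i) (patch d q x j))"

definition gram :: "('a \<Rightarrow> 'a \<Rightarrow> real) \<Rightarrow> ('m::finite \<Rightarrow> 'a) \<Rightarrow> real^'m^'m" where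
  "gram k X = (\<chi> i j. k (X i) (X j))"

definition min_norm_interp ::
  "('a \<Rightarrow> 'a \<Rightarrow> real) \<Rightarrow> ('m::finite \<Rightarrow> 'a) \<Rightarrow> real^'m \<Rightarrow> 'a \<Rightarrow> real" where
  "min_norm_interp k X Y z = (\<chi> i. k z (X i)) \<bullet> (matrix_inv (gram k X) *v Y)"

definition train_X :: "(nat \<Rightarrow> real) \<Rightarrow> 2 \<Rightarrow> (nat \<Rightarrow> real)" where
  "train_X x = (\<lambda>i. if i = 0 then x else (\<lambda>j. - x j))"

definition train_Y :: "real^2" where
  "train_Y = (\<chi> i. if i = 0 then 1 else -1)"

end

theory Submission
  imports Defs
begin

text \<open>Both kernels are invariant under negating both arguments, so on the training set
  \<open>{(x,1),(-x,-1)}\<close> the label vector is an eigenvector of the Gram matrix and the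
  interpolant is proportional to \<open>k(z,x) - k(z,-x)\<close>. For the FC-NTK this antisymmetric part
  is \<open>2 z\<^sup>T x\<close>: the \<open>arccos\<close> term changes to \<open>\<pi> - arccos\<close> and the \<open>sin\<close> term is unchanged.
  For CNTK-GAP, summing the same identity over all pairs of cyclic patches gives
  \<open>2 q (\<Sum>z) (\<Sum>x) / d\<^sup>2\<close>, since each coordinate of \<open>z\<close> (and of \<open>x\<close>) occurs exactly once in
  every patch position. Hence the interpolants are \<open>z\<^sup>T x / x\<^sup>T x\<close> and
  \<open>(\<Sum>z) / (\<Sum>x)\<close> respectively.\<close>

lemma ip_commute: "ip n z x = ip n x z"
  by (simp add: ip_def mult.commute)

lemma ip_uminus_left: "ip n (\<lambda>j. - z j) x = - ip n z x"
  by (simp add: ip_def sum_negf)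

lemma ip_uminus_right: "ip n z (\<lambda>j. - x j) = - ip n z x"
  by (simp add: ip_def sum_negf)

lemma ip_self_nonneg: "ip n x x \<ge> 0"
  by (simp add: ip_def sum_nonneg)

lemma ip_self_eq_0_iff: "ip n x x = 0 \<longleftrightarrow> (\<forall>i<n. x i = 0)"
  by (auto simp: ip_def sum_nonneg_eq_0_iff)

lemma vnorm_uminus: "vnorm n (\<lambda>j. - x j) = vnorm n x"
  by (simp add: vnorm_def ip_uminus_left ip_uminus_right)

lemma vnorm_nonneg: "vnorm n x \<ge> 0"
  by (simp add: vnorm_def ip_self_nonneg)

lemma vnorm_mult_self: "vnorm n x * vnorm n x = ip n x x"
  by (simp add: vnorm_def ip_self_nonneg)

lemma ip_eq_0_if_vnorm_eq_0:
  assumes "vnorm n z = 0"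
  shows "ip n z x = 0"
proof -
  have "ip n z z = 0"
    using vnorm_mult_self[of n z] assms by simp
  then have "\<forall>i<n. z i = 0"
    by (simp add: ip_self_eq_0_iff)
  then show ?thesis
    by (simp add: ip_def)
qed

lemma abs_ip_le_vnorm_mult: "\<bar>ip n z x\<bar> \<le> vnorm n z * vnorm n x"
proof -
  have "(ip n z x)\<^sup>2 \<le> ip n z z * ip n x x"
    using Cauchy_Schwarz_ineq_sum[of z x "{..<n}"] by (simp add: ip_def power2_eq_square)
  then have "sqrt ((ip n z x)\<^sup>2) \<le> sqrt (ip n z z * ip n x x)"
    by (rule real_sqrt_le_mono)
  then show ?thesis
    by (simp add: vnorm_def real_sqrt_mult)
qed

lemma fc_ntk_uminus: "fc_ntk n (\<lambda>j. - z j) (\<lambda>j. - x j) = fc_ntk n z x"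
  by (simp add: fc_ntk_def vnorm_uminus ip_uminus_left ip_uminus_right)

lemma fc_ntk_diff_uminus: "fc_ntk n z x - fc_ntk n z (\<lambda>j. - x j) = 2 * ip n z x"
proof (cases "vnorm n z = 0 \<or> vnorm n x = 0")
  case True
  then have "ip n z x = 0"
    using ip_eq_0_if_vnorm_eq_0 ip_commute by metis
  with True show ?thesis
    by (auto simp: fc_ntk_def vnorm_uminus)
next
  case False
  define a where "a = vnorm n z * vnorm n x"
  define t where "t = ip n z x / a"
  have "a > 0"
    using False vnorm_nonneg[of n z] vnorm_nonneg[of n x] by (simp add: a_def less_le)
  then have "\<bar>t\<bar> \<le> 1"
    using abs_ip_le_vnorm_mult[of n z x] by (simp add: t_def a_def abs_div divide_le_eq_1)
  then have arccos_t: "arccos (- t) = pi - arccos t"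
    by (intro arccos_minus) auto
  have "fc_ntk n z x = (2 * ip n z x * (pi - arccos t) + a * sin (arccos t)) / pi"
    using False by (simp add: fc_ntk_def Let_def a_def t_def)
  moreover have "fc_ntk n z (\<lambda>j. - x j)
      = (2 * (- ip n z x) * (pi - arccos (- t)) + a * sin (arccos (- t))) / pi"
    using False by (simp add: fc_ntk_def Let_def a_def t_def vnorm_uminus ip_uminus_right)
  ultimately show ?thesis
    by (simp add: arccos_t diff_divide_distrib[symmetric] algebra_simps)
qed

lemma fc_ntk_self: "fc_ntk n x x = 2 * ip n x x"
proof (cases "vnorm n x = 0")
  case True
  then show ?thesis
    by (simp add: fc_ntk_def ip_eq_0_if_vnorm_eq_0)
next
  case False
  then have "ip n x x / (vnorm n x * vnorm n x) = 1"
    by (simp add: vnorm_mult_self[symmetric])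
  with False show ?thesis
    by (simp add: fc_ntk_def)
qed

lemma sum_lessThan_mod_add:
  fixes d l :: nat
  shows "(\<Sum>i<d. f ((i + l) mod d)) = (\<Sum>i<d. f i :: 'a::comm_monoid_add)"
proof (induction l arbitrary: f)
  case 0
  show ?case
    by (intro sum.cong) auto
next
  case (Suc l)
  have shift1: "(\<Sum>i<d. g ((i + 1) mod d)) = (\<Sum>i<d. g i :: 'a)" for g
  proof (cases d)
    case (Suc m)
    have "(\<Sum>i<m. g ((i + 1) mod Suc m)) = (\<Sum>i<m. g (Suc i))"
      by (intro sum.cong) auto
    then have "(\<Sum>i<Suc m. g ((i + 1) mod Suc m)) = (\<Sum>i<m. g (Suc i)) + g 0"
      by simp
    also have "\<dots> = (\<Sum>i<Suc m. g i)"
      using sum.lessThan_Suc_shift[of g m] by (simp add: add.commute)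
    finally show ?thesis
      using Suc by simp
  qed simp
  have "(\<Sum>i<d. f ((i + Suc l) mod d)) = (\<Sum>i<d. f (((i + 1) mod d + l) mod d))"
    by (simp add: mod_add_left_eq)
  also have "\<dots> = (\<Sum>i<d. f ((i + l) mod d))"
    by (rule shift1)
  finally show ?case
    using Suc.IH by simp
qed

lemma sum_ip_patch:
  "(\<Sum>i<d. \<Sum>j<d. ip q (patch d q z i) (patch d q x j)) = real q * (\<Sum>i<d. z i) * (\<Sum>i<d. x i)"
proof -
  have "(\<Sum>i<d. \<Sum>j<d. ip q (patch d q z i) (patch d q x j))
      = (\<Sum>i<d. \<Sum>j<d. \<Sum>l<q. z ((i + l) mod d) * x ((j + l) mod d))"
    by (simp add: ip_def patch_def)
  also have "\<dots> = (\<Sum>i<d. \<Sum>l<q. \<Sum>j<d. z ((i + l) mod d) * x ((j + l) mod d))"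
    by (intro sum.cong refl sum.swap)
  also have "\<dots> = (\<Sum>l<q. \<Sum>i<d. \<Sum>j<d. z ((i + l) mod d) * x ((j + l) mod d))"
    by (rule sum.swap)
  also have "\<dots> = (\<Sum>l<q. (\<Sum>i<d. z ((i + l) mod d)) * (\<Sum>j<d. x ((j + l) mod d)))"
    by (simp only: sum_product)
  finally show ?thesis
    by (simp add: sum_lessThan_mod_add)
qed

lemma patch_uminus: "patch d q (\<lambda>j. - x j) i = (\<lambda>j. - patch d q x i j)"
  by (simp add: patch_def)

lemma cntk_gap_uminus: "cntk_gap d q (\<lambda>j. - z j) (\<lambda>j. - x j) = cntk_gap d q z x"
  by (simp add: cntk_gap_def patch_uminus fc_ntk_uminus)

lemma cntk_gap_diff_uminus:
  "cntk_gap d q z x - cntk_gap d q z (\<lambda>j. - x j)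
     = 2 * real q * (\<Sum>i<d. z i) * (\<Sum>i<d. x i) / (real d)\<^sup>2"
proof -
  have "cntk_gap d q z x - cntk_gap d q z (\<lambda>j. - x j)
      = (\<Sum>i<d. \<Sum>j<d. 2 * ip q (patch d q z i) (patch d q x j)) / (real d)\<^sup>2"
    by (simp add: cntk_gap_def patch_uminus fc_ntk_diff_uminus[symmetric] sum_subtractf
        diff_divide_distrib)
  then show ?thesis
    by (simp add: sum_distrib_left[symmetric] sum_ip_patch)
qed

lemma matrix_inv_left: "invertible A \<Longrightarrow> matrix_inv A ** A = mat 1"
  unfolding invertible_def matrix_inv_def by (metis (mono_tags, lifting) someI_ex)

lemma matrix_inv_mult_eigenvector:
  fixes A :: "'a::field^'n^'n"
  assumes "invertible A" and "A *v v = c *s v" and "v \<noteq> 0"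
  shows "c \<noteq> 0" and "matrix_inv A *v v = inverse c *s v"
proof -
  have inv_A: "matrix_inv A *v (A *v w) = w" for w
    by (simp add: matrix_vector_mul_assoc matrix_inv_left[OF assms(1)])
  show "c \<noteq> 0"
    using inv_A[of v] assms(2,3) by auto
  then have "A *v (inverse c *s v) = v"
    using assms(2) by (simp add: vector_scalar_commute)
  then show "matrix_inv A *v v = inverse c *s v"
    using inv_A by metis
qed

lemma UNIV_2_eq_0_1: "(UNIV :: 2 set) = {0, 1}"
proof -
  have "(2::2) = 0"
    by simp
  then show ?thesis
    using UNIV_2 by auto
qed

lemma gram_train_mult_train_Y:
  assumes "\<And>a b. k (\<lambda>j. - a j) (\<lambda>j. - b j) = k a b"
  shows "gram k (train_X x) *v train_Y = (k x x - k x (\<lambda>j. - x j)) *s train_Y"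
  using assms[of x x] assms[of x "\<lambda>j. - x j"]
  by (simp add: vec_eq_iff UNIV_2_eq_0_1 matrix_vector_mult_def gram_def train_X_def train_Y_def)

lemma min_norm_interp_train:
  assumes "invertible (gram k (train_X x))"
    and "\<And>a b. k (\<lambda>j. - a j) (\<lambda>j. - b j) = k a b"
  shows "k x x - k x (\<lambda>j. - x j) \<noteq> 0"
    and "min_norm_interp k (train_X x) train_Y z
           = (k z x - k z (\<lambda>j. - x j)) / (k x x - k x (\<lambda>j. - x j))"
proof -
  have "train_Y \<noteq> 0"
    by (simp add: vec_eq_iff train_Y_def)
  note eigen = matrix_inv_mult_eigenvector[OF assms(1) gram_train_mult_train_Y[of k x, OF assms(2)] this]
  show "k x x - k x (\<lambda>j. - x j) \<noteq> 0"
    by (fact eigen(1))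
  show "min_norm_interp k (train_X x) train_Y z
          = (k z x - k z (\<lambda>j. - x j)) / (k x x - k x (\<lambda>j. - x j))"
    unfolding min_norm_interp_def eigen(2)
    by (simp add: inner_vec_def UNIV_2_eq_0_1 train_X_def train_Y_def divide_inverse
        left_diff_distrib)
qed

lemma min_norm_interp_fc_ntk:
  assumes "\<exists>i<n. x i \<noteq> 0"
  shows "min_norm_interp (fc_ntk n) (train_X x) train_Y z = ip n z x / ip n x x"
proof -
  have "ip n x x \<noteq> 0"
    using assms by (simp add: ip_self_eq_0_iff)
  have k_antipodal: "fc_ntk n x (\<lambda>j. - x j) = 0"
    using fc_ntk_diff_uminus[of n x x] by (simp add: fc_ntk_self)
  have "gram (fc_ntk n) (train_X x) = (2 * ip n x x) *\<^sub>R mat 1"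
    using k_antipodal fc_ntk_uminus[of n x x] fc_ntk_uminus[of n x "\<lambda>j. - x j"]
    by (simp add: vec_eq_iff forall_2 gram_def train_X_def mat_def fc_ntk_self)
  moreover have "invertible (mat 1 :: real^2^2)"
    by (auto simp: invertible_def)
  ultimately have "invertible (gram (fc_ntk n) (train_X x))"
    using \<open>ip n x x \<noteq> 0\<close> by (simp add: scalar_invertible)
  then show ?thesis
    by (simp add: min_norm_interp_train fc_ntk_uminus fc_ntk_diff_uminus)
qed

lemma min_norm_interp_cntk_gap:
  assumes "invertible (gram (cntk_gap d q) (train_X x))"
  shows "(\<Sum>i<d. x i) \<noteq> 0"
    and "min_norm_interp (cntk_gap d q) (train_X x) train_Y z = (\<Sum>i<d. z i) / (\<Sum>i<d. x i)"
proof -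
  note interp = min_norm_interp_train[of "cntk_gap d q", OF assms cntk_gap_uminus]
  show "(\<Sum>i<d. x i) \<noteq> 0"
    using interp(1) by (auto simp: cntk_gap_diff_uminus)
  show "min_norm_interp (cntk_gap d q) (train_X x) train_Y z = (\<Sum>i<d. z i) / (\<Sum>i<d. x i)"
    using interp(1) unfolding interp(2) cntk_gap_diff_uminus by (simp add: power2_eq_square)
qed

theorem theorem2:
  fixes d q :: nat and x :: "nat \<Rightarrow> real"
  assumes xnz: "\<exists>i<d. x i \<noteq> 0"
  shows "(\<forall>z. min_norm_interp (fc_ntk d) (train_X x) train_Y z \<ge> 0 \<longleftrightarrow> ip d z x \<ge> 0)
       \<and> ((1 \<le> q \<and> q \<le> d \<and> invertible (gram (cntk_gap d q) (train_X x))) \<longrightarrow>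
           ((\<forall>z. min_norm_interp (cntk_gap d q) (train_X x) train_Y z \<ge> 0
                   \<longleftrightarrow> ip d z (\<lambda>_. 1) \<ge> 0)
          \<or> (\<forall>z. min_norm_interp (cntk_gap d q) (train_X x) train_Y z \<ge> 0
                   \<longleftrightarrow> ip d z (\<lambda>_. 1) \<le> 0)))"
proof (intro conjI impI)
  have "ip d x x > 0"
    using xnz ip_self_nonneg[of d x] by (simp add: less_le ip_self_eq_0_iff)
  then show "\<forall>z. min_norm_interp (fc_ntk d) (train_X x) train_Y z \<ge> 0 \<longleftrightarrow> ip d z x \<ge> 0"
    by (simp add: min_norm_interp_fc_ntk[OF xnz] zero_le_divide_iff)
next
  assume "1 \<le> q \<and> q \<le> d \<and> invertible (gram (cntk_gap d q) (train_X x))"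
  then have inv: "invertible (gram (cntk_gap d q) (train_X x))"
    by blast
  have "ip d z (\<lambda>_. 1) = (\<Sum>i<d. z i)" for z
    by (simp add: ip_def)
  then show "(\<forall>z. min_norm_interp (cntk_gap d q) (train_X x) train_Y z \<ge> 0
                   \<longleftrightarrow> ip d z (\<lambda>_. 1) \<ge> 0)
          \<or> (\<forall>z. min_norm_interp (cntk_gap d q) (train_X x) train_Y z \<ge> 0
                   \<longleftrightarrow> ip d z (\<lambda>_. 1) \<le> 0)"
    using min_norm_interp_cntk_gap[OF inv] by (auto simp: zero_le_divide_iff)
qed

end
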